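(* Let $d\ge1$ and $N>0$. For $\rho_z>0$ let $$G_{\rho_z}(r)=1-\frac1N\left(\frac{\rho_z}{r}\right)^{d/2}J_{d/2}(2\pi\rho_z r),\qquad r>0,$$ be the pair correlation function of a step blue noise pattern of $N$ samples in $d$ dimensions with zero region $\rho_z$. Call $\rho_z$ realizable if $G_{\rho_z}(r)\ge0$ for all $r>0$. Then the maximum realizable zero region is $$\rho_z^*=\left(\frac{N\,\Gamma\!\left(1+\frac d2\right)}{\pi^{d/2}}\right)^{1/d},$$ i.e. the inverse of the $d$-th root of the volume of a $d$-dimensional ball of radius $N^{-1/d}$. Equivalently, the minimum number of samples needed to realize a step blue noise pattern with zero region $\rho_z$ is $N=\pi^{d/2}\rho_z^d/\Gamma(1+d/2)$.
   Context: A step blue noise pattern with zero region $\rho_z$ is a sampling pattern whose radial power spectrum is $0$ for frequencies $\rho\le\rho_z$ and $1$ for $\rho>\rho_z$ (so its power spectrum is automatically nonnegative); its pair correlation function is the $G_{\rho_z}$ given in the claim. $J_{d/2}$ denotes the Bessel function of the first kind of order $d/2$ and $\Gamma$ the gamma function. Realizability of a sampling pattern requires nonnegativity of its power spectrum and of its pair correlation function. *)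

theory Defs
  imports "HOL-Analysis.Analysis"
begin

definition besselJ :: "real \<Rightarrow> real \<Rightarrow> real" where
  "besselJ nu x = (\<Sum>m. (-1) ^ m / (fact m * Gamma (real m + nu + 1)) * (x / 2) powr (2 * real m + nu))"

definition stepPCF :: "nat \<Rightarrow> real \<Rightarrow> real \<Rightarrow> real \<Rightarrow> real" where
  "stepPCF d N rho r = 1 - (1 / N) * (rho / r) powr (real d / 2) * besselJ (real d / 2) (2 * pi * rho * r)"

definition realizable :: "nat \<Rightarrow> real \<Rightarrow> real \<Rightarrow> bool" where
  "realizable d N rho \<longleftrightarrow> rho > 0 \<and> (\<forall>r>0. stepPCF d N rho r \<ge> 0)"

end

theory Submission
  imports Defs
begin

(* J_nu(x) = (x/2)^nu g(x^2), where g = bessel_reduced nu is an entire power series solving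
   4y g'' + 4(nu+1) g' + g = 0. Along this ODE the energy g^2 + 4y g'^2 has derivative
   -(4+8nu) g'^2 <= 0, so |g(y)| <= g(0) = 1/Gamma(nu+1) for y >= 0. The pair correlation
   function is 1 - pi^(d/2) rho^d g((2 pi rho r)^2) / N with nu = d/2; as g is continuous at 0,
   it is nonnegative for all r > 0 exactly when pi^(d/2) rho^d / Gamma(1+d/2) <= N. *)

definition bessel_coeff :: "real \<Rightarrow> nat \<Rightarrow> real" where
  "bessel_coeff nu n = (-1) ^ n / (4 ^ n * fact n * Gamma (real n + nu + 1))"

definition bessel_reduced :: "real \<Rightarrow> real \<Rightarrow> real" where
  "bessel_reduced nu y = (\<Sum>n. bessel_coeff nu n * y ^ n)"

definition bessel_reduced' :: "real \<Rightarrow> real \<Rightarrow> real" where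
  "bessel_reduced' nu y = (\<Sum>n. diffs (bessel_coeff nu) n * y ^ n)"

definition bessel_reduced'' :: "real \<Rightarrow> real \<Rightarrow> real" where
  "bessel_reduced'' nu y = (\<Sum>n. diffs (diffs (bessel_coeff nu)) n * y ^ n)"

lemma bessel_coeff_Suc:
  assumes "nu > -1"
  shows "4 * (real n + 1) * (real n + nu + 1) * bessel_coeff nu (Suc n) = - bessel_coeff nu n"
proof -
  have pos: "real n + nu + 1 > 0"
    using assms by simp
  then have "real n + nu + 1 \<notin> \<int>\<^sub>\<le>\<^sub>0"
    by (auto dest: nonpos_Ints_nonpos)
  then have "Gamma ((real n + nu + 1) + 1) = (real n + nu + 1) * Gamma (real n + nu + 1)"
    by (rule Gamma_plus1)
  then have Gamma_Suc: "Gamma (real (Suc n) + nu + 1) = (real n + nu + 1) * Gamma (real n + nu + 1)"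
    by (simp add: add_ac)
  define D where "D = 4 * (real n + 1) * (real n + nu + 1)"
  have "D > 0"
    unfolding D_def using pos by simp
  have "bessel_coeff nu (Suc n) = - bessel_coeff nu n / D"
    unfolding bessel_coeff_def Gamma_Suc D_def by (simp add: algebra_simps)
  with \<open>D > 0\<close> show ?thesis
    unfolding D_def[symmetric] by simp
qed

lemma summable_bessel_coeff:
  assumes "nu > -1"
  shows "summable (\<lambda>n. bessel_coeff nu n * y ^ n)"
proof (rule summable_ratio_test[where c = "1/2" and N = "nat \<lceil>\<bar>y\<bar>\<rceil> + 1"])
  fix n
  assume "nat \<lceil>\<bar>y\<bar>\<rceil> + 1 \<le> n"
  then have y_le: "\<bar>y\<bar> \<le> real n" and n_ge: "real n \<ge> 1"
    by linarith+
  define D where "D = 4 * (real n + 1) * (real n + nu + 1)"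
  have "4 * (real n + 1) * 1 \<le> D"
    unfolding D_def using assms n_ge by (intro mult_left_mono) auto
  then have "2 * \<bar>y\<bar> \<le> D"
    using y_le by simp
  have "bessel_coeff nu n = - (D * bessel_coeff nu (Suc n))"
    using bessel_coeff_Suc[OF assms, of n, folded D_def] by simp
  then have "\<bar>bessel_coeff nu n\<bar> = D * \<bar>bessel_coeff nu (Suc n)\<bar>"
    using \<open>2 * \<bar>y\<bar> \<le> D\<close> by (simp add: abs_mult)
  moreover have "2 * \<bar>y\<bar> * \<bar>bessel_coeff nu (Suc n)\<bar> \<le> D * \<bar>bessel_coeff nu (Suc n)\<bar>"
    using \<open>2 * \<bar>y\<bar> \<le> D\<close> by (rule mult_right_mono) simp
  ultimately have "\<bar>y\<bar> * \<bar>bessel_coeff nu (Suc n)\<bar> * \<bar>y\<bar> ^ n \<le> 1/2 * \<bar>bessel_coeff nu n\<bar> * \<bar>y\<bar> ^ n"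
    by (intro mult_right_mono) auto
  then show "norm (bessel_coeff nu (Suc n) * y ^ Suc n) \<le> 1/2 * norm (bessel_coeff nu n * y ^ n)"
    by (simp add: abs_mult power_abs mult_ac)
qed simp

lemma summable_diffs_bessel_coeff:
  assumes "nu > -1"
  shows "summable (\<lambda>n. diffs (bessel_coeff nu) n * y ^ n)"
    and "summable (\<lambda>n. diffs (diffs (bessel_coeff nu)) n * y ^ n)"
  using summable_bessel_coeff[OF assms]
  by (intro termdiff_converges_all; blast)+

lemma has_field_derivative_bessel_reduced:
  assumes "nu > -1"
  shows "(bessel_reduced nu has_field_derivative bessel_reduced' nu y) (at y)"
  unfolding bessel_reduced_def bessel_reduced'_def
  by (rule termdiffs_strong_converges_everywhere) (rule summable_bessel_coeff[OF assms])

lemma has_field_derivative_bessel_reduced':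
  assumes "nu > -1"
  shows "(bessel_reduced' nu has_field_derivative bessel_reduced'' nu y) (at y)"
  unfolding bessel_reduced'_def bessel_reduced''_def
  by (rule termdiffs_strong_converges_everywhere) (rule summable_diffs_bessel_coeff(1)[OF assms])

lemma bessel_reduced_0: "bessel_reduced nu 0 = 1 / Gamma (nu + 1)"
  by (simp only: bessel_reduced_def powser_zero) (simp add: bessel_coeff_def)

lemma bessel_reduced_ode:
  assumes "nu > -1"
  shows "4 * y * bessel_reduced'' nu y + 4 * (nu + 1) * bessel_reduced' nu y + bessel_reduced nu y = 0"
proof -
  let ?c = "bessel_coeff nu"
  have "(\<lambda>n. y * (diffs (diffs ?c) n * y ^ n)) sums (y * bessel_reduced'' nu y)"
    unfolding bessel_reduced''_def
    by (intro sums_mult summable_sums summable_diffs_bessel_coeff(2)[OF assms])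
  then have "(\<lambda>n. real (Suc n) * diffs ?c (Suc n) * y ^ Suc n) sums (y * bessel_reduced'' nu y)"
    by (simp add: diffs_def mult_ac)
  then have y_g'': "(\<lambda>n. real n * diffs ?c n * y ^ n) sums (y * bessel_reduced'' nu y)"
    by (subst (asm) sums_Suc_iff) simp
  have g': "(\<lambda>n. diffs ?c n * y ^ n) sums bessel_reduced' nu y"
    unfolding bessel_reduced'_def by (intro summable_sums summable_diffs_bessel_coeff(1)[OF assms])
  have g: "(\<lambda>n. ?c n * y ^ n) sums bessel_reduced nu y"
    unfolding bessel_reduced_def by (intro summable_sums summable_bessel_coeff[OF assms])
  have "(\<lambda>n. 4 * (real n * diffs ?c n * y ^ n) + 4 * (nu + 1) * (diffs ?c n * y ^ n) + ?c n * y ^ n)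
      sums (4 * (y * bessel_reduced'' nu y) + 4 * (nu + 1) * bessel_reduced' nu y + bessel_reduced nu y)"
    by (intro sums_add sums_mult y_g'' g' g)
  moreover have "4 * (real n * diffs ?c n * y ^ n) + 4 * (nu + 1) * (diffs ?c n * y ^ n) + ?c n * y ^ n = 0"
    for n
  proof -
    have "4 * (real n + nu + 1) * diffs ?c n + ?c n = 0"
      using bessel_coeff_Suc[OF assms, of n] by (simp add: diffs_def algebra_simps)
    moreover have "4 * (real n * diffs ?c n * y ^ n) + 4 * (nu + 1) * (diffs ?c n * y ^ n) + ?c n * y ^ n
                   = (4 * (real n + nu + 1) * diffs ?c n + ?c n) * y ^ n"
      by (simp add: algebra_simps)
    ultimately show ?thesis
      by simp
  qed
  ultimately have "(\<lambda>n. 0) sums (4 * (y * bessel_reduced'' nu y) + 4 * (nu + 1) * bessel_reduced' nu y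
                                  + bessel_reduced nu y)"
    by simp
  then show ?thesis
    using sums_unique2[OF sums_zero] by (simp add: mult.assoc)
qed

lemma has_real_derivative_bessel_energy:
  assumes "nu > -1"
  shows "((\<lambda>y. (bessel_reduced nu y)\<^sup>2 + 4 * y * (bessel_reduced' nu y)\<^sup>2)
           has_real_derivative - (4 + 8 * nu) * (bessel_reduced' nu y)\<^sup>2) (at y)"
proof -
  let ?g = "bessel_reduced nu y" and ?g' = "bessel_reduced' nu y" and ?g'' = "bessel_reduced'' nu y"
  have deriv: "((\<lambda>y. (bessel_reduced nu y)\<^sup>2 + 4 * y * (bessel_reduced' nu y)\<^sup>2)
          has_real_derivative 2 * ?g * ?g' + 4 * ?g'\<^sup>2 + 2 * ?g' * (4 * y * ?g'')) (at y)"
    by (auto intro!: derivative_eq_intros has_field_derivative_bessel_reduced[OF assms]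
          has_field_derivative_bessel_reduced'[OF assms] simp: algebra_simps)
  have ode: "4 * y * ?g'' = - 4 * (nu + 1) * ?g' - ?g"
    using bessel_reduced_ode[OF assms, of y] by linarith
  have "2 * ?g * ?g' + 4 * ?g'\<^sup>2 + 2 * ?g' * (4 * y * ?g'')
        = 2 * ?g * ?g' + 4 * ?g'\<^sup>2 + 2 * ?g' * (- 4 * (nu + 1) * ?g' - ?g)"
    by (simp only: ode)
  also have "\<dots> = - (4 + 8 * nu) * ?g'\<^sup>2"
    by (simp add: algebra_simps power2_eq_square)
  finally show ?thesis
    by (rule DERIV_cong[OF deriv])
qed

lemma abs_bessel_reduced_le:
  assumes "nu \<ge> -1/2" and "y \<ge> 0"
  shows "\<bar>bessel_reduced nu y\<bar> \<le> 1 / Gamma (nu + 1)"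
proof -
  define E where "E = (\<lambda>y. (bessel_reduced nu y)\<^sup>2 + 4 * y * (bessel_reduced' nu y)\<^sup>2)"
  have "\<exists>D. (E has_real_derivative D) (at x) \<and> D \<le> 0" for x
  proof (intro exI conjI)
    show "(E has_real_derivative - (4 + 8 * nu) * (bessel_reduced' nu x)\<^sup>2) (at x)"
      unfolding E_def using assms(1) by (intro has_real_derivative_bessel_energy) simp
    show "- (4 + 8 * nu) * (bessel_reduced' nu x)\<^sup>2 \<le> 0"
      using assms(1) by (intro mult_nonpos_nonneg) auto
  qed
  then have "E y \<le> E 0"
    by (intro DERIV_nonpos_imp_nonincreasing[OF assms(2)]) blast
  then have "(bessel_reduced nu y)\<^sup>2 + 4 * y * (bessel_reduced' nu y)\<^sup>2 \<le> (bessel_reduced nu 0)\<^sup>2"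
    unfolding E_def by simp
  moreover have "4 * y * (bessel_reduced' nu y)\<^sup>2 \<ge> 0"
    using assms(2) by simp
  ultimately have "(bessel_reduced nu y)\<^sup>2 \<le> (bessel_reduced nu 0)\<^sup>2"
    by linarith
  then have "\<bar>bessel_reduced nu y\<bar> \<le> \<bar>bessel_reduced nu 0\<bar>"
    unfolding abs_le_square_iff .
  moreover have "Gamma (nu + 1) > 0"
    using assms(1) by simp
  ultimately show ?thesis
    by (simp add: bessel_reduced_0)
qed

lemma besselJ_eq_bessel_reduced:
  assumes "nu > -1" and "x > 0"
  shows "besselJ nu x = (x / 2) powr nu * bessel_reduced nu (x\<^sup>2)"
proof -
  have "(-1) ^ m / (fact m * Gamma (real m + nu + 1)) * (x / 2) powr (2 * real m + nu)
        = (x / 2) powr nu * (bessel_coeff nu m * (x\<^sup>2) ^ m)" for m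
  proof -
    have "(x / 2) powr (2 * real m + nu) = (x / 2) powr real (2 * m) * (x / 2) powr nu"
      by (simp add: powr_add)
    also have "(x / 2) powr real (2 * m) = (x / 2) ^ (2 * m)"
      using assms(2) by (intro powr_realpow) simp
    also have "\<dots> = (x\<^sup>2) ^ m / 4 ^ m"
      by (simp add: power_mult power_divide)
    finally show ?thesis
      unfolding bessel_coeff_def by (simp add: mult_ac)
  qed
  then have "besselJ nu x = (\<Sum>m. (x / 2) powr nu * (bessel_coeff nu m * (x\<^sup>2) ^ m))"
    unfolding besselJ_def by presburger
  also have "\<dots> = (x / 2) powr nu * bessel_reduced nu (x\<^sup>2)"
    unfolding bessel_reduced_def by (rule suminf_mult[OF summable_bessel_coeff[OF assms(1)]])
  finally show ?thesis .
qed

lemma stepPCF_eq_bessel_reduced: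
  assumes "rho > 0" and "r > 0"
  shows "stepPCF d N rho r
         = 1 - pi powr (real d / 2) * rho ^ d / N * bessel_reduced (real d / 2) ((2 * pi * rho * r)\<^sup>2)"
proof -
  have J: "besselJ (real d / 2) (2 * pi * rho * r)
           = (pi * rho * r) powr (real d / 2) * bessel_reduced (real d / 2) ((2 * pi * rho * r)\<^sup>2)"
    using besselJ_eq_bessel_reduced[of "real d / 2" "2 * pi * rho * r"] assms by (simp add: mult.assoc)
  have prod: "rho / r * (pi * rho * r) = pi * rho\<^sup>2"
    using assms by (simp add: field_simps power2_eq_square)
  have "(rho / r) powr (real d / 2) * (pi * rho * r) powr (real d / 2)
        = (pi * rho\<^sup>2) powr (real d / 2)"
    by (simp only: powr_mult[symmetric] prod)
  also have "\<dots> = pi powr (real d / 2) * (rho\<^sup>2) powr (real d / 2)"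
    by (rule powr_mult)
  also have "(rho\<^sup>2) powr (real d / 2) = rho ^ d"
  proof -
    have "(rho\<^sup>2) powr (real d / 2) = (rho powr 2) powr (real d / 2)"
      using assms by simp
    also have "\<dots> = rho powr real d"
      by (simp add: powr_powr)
    finally show ?thesis
      using assms by (simp add: powr_realpow)
  qed
  finally show ?thesis
    unfolding stepPCF_def J by (simp add: mult_ac)
qed

lemma forall_pos_le_iff_le_at_0:
  fixes f :: "real \<Rightarrow> real"
  assumes "isCont f 0" and "\<And>y. y > 0 \<Longrightarrow> f y \<le> f 0"
  shows "(\<forall>y>0. f y \<le> M) \<longleftrightarrow> f 0 \<le> M"
proof
  assume "\<forall>y>0. f y \<le> M"
  then have "eventually (\<lambda>y. f y \<le> M) (at_right 0)"
    by (auto intro: eventually_mono[OF eventually_at_right_less])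
  moreover have "(f \<longlongrightarrow> f 0) (at_right 0)"
    using assms(1) by (simp add: isCont_def filterlim_at_split)
  ultimately show "f 0 \<le> M"
    by (intro tendsto_upperbound) auto
qed (use assms(2) in force)

lemma realizable_iff:
  assumes "N > 0"
  shows "realizable d N rho \<longleftrightarrow>
           rho > 0 \<and> pi powr (real d / 2) * rho ^ d / Gamma (1 + real d / 2) \<le> N"
proof (cases "rho > 0")
  case True
  define c where "c = pi powr (real d / 2) * rho ^ d / N"
  define g where "g = bessel_reduced (real d / 2)"
  have "c > 0"
    unfolding c_def using True assms by simp
  have "realizable d N rho \<longleftrightarrow> (\<forall>r>0. c * g ((2 * pi * rho * r)\<^sup>2) \<le> 1)"
    using True unfolding realizable_def c_def g_def by (simp add: stepPCF_eq_bessel_reduced)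
  also have "\<dots> \<longleftrightarrow> (\<forall>y>0. c * g y \<le> 1)"
  proof (intro iffI allI impI)
    fix y :: real
    assume all_r: "\<forall>r>0. c * g ((2 * pi * rho * r)\<^sup>2) \<le> 1" and "y > 0"
    define r where "r = sqrt y / (2 * pi * rho)"
    have "r > 0" and "(2 * pi * rho * r)\<^sup>2 = y"
      using True \<open>y > 0\<close> by (simp_all add: r_def)
    with all_r show "c * g y \<le> 1"
      by metis
  qed (use True in simp)
  also have "\<dots> \<longleftrightarrow> c * g 0 \<le> 1"
  proof (rule forall_pos_le_iff_le_at_0)
    have "isCont g 0"
      unfolding g_def by (rule DERIV_isCont[OF has_field_derivative_bessel_reduced]) simp
    then show "isCont (\<lambda>y. c * g y) 0"
      by (intro continuous_intros)
    show "c * g y \<le> c * g 0" if "y > 0" for y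
    proof -
      have "g y \<le> g 0"
        unfolding g_def bessel_reduced_0 using abs_bessel_reduced_le[of "real d / 2" y] \<open>y > 0\<close>
        by simp
      then show ?thesis
        using \<open>c > 0\<close> by simp
    qed
  qed
  also have "c * g 0 = pi powr (real d / 2) * rho ^ d / Gamma (1 + real d / 2) / N"
    unfolding c_def g_def bessel_reduced_0 by (simp add: add.commute)
  also have "\<dots> \<le> 1 \<longleftrightarrow> pi powr (real d / 2) * rho ^ d / Gamma (1 + real d / 2) \<le> N"
    using assms by (rule divide_le_eq_1_pos)
  finally show ?thesis
    using True by simp
qed (simp add: realizable_def)

lemma le_powr_inverse_iff:
  fixes x q :: real
  assumes "0 \<le> x" and "0 \<le> q" and "n > 0"
  shows "x \<le> q powr (1 / real n) \<longleftrightarrow> x ^ n \<le> q"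
proof -
  have "x \<le> root n q \<longleftrightarrow> root n (x ^ n) \<le> root n q"
    using assms by (simp only: real_root_power_cancel)
  also have "\<dots> \<longleftrightarrow> x ^ n \<le> q"
    using assms(3) by (rule real_root_le_iff)
  finally show ?thesis
    using assms by (simp add: root_powr_inverse)
qed

lemma realizable_iff_le_root:
  assumes "d \<ge> 1" and "N > 0"
  shows "realizable d N rho \<longleftrightarrow>
           rho > 0 \<and> rho \<le> (N * Gamma (1 + real d / 2) / pi powr (real d / 2)) powr (1 / real d)"
proof -
  have "pi powr (real d / 2) * rho ^ d / Gamma (1 + real d / 2) \<le> N \<longleftrightarrow>
        rho \<le> (N * Gamma (1 + real d / 2) / pi powr (real d / 2)) powr (1 / real d)" if "rho > 0"
    using that assms
    by (simp add: le_powr_inverse_iff pos_divide_le_eq pos_le_divide_eq mult.commute)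
  then show ?thesis
    using realizable_iff[OF assms(2)] by blast
qed

theorem lemma5:
  fixes d :: nat and N :: real
  assumes "d \<ge> 1" and "N > 0"
  shows "realizable d N ((N * Gamma (1 + real d / 2) / pi powr (real d / 2)) powr (1 / real d))
       \<and> (\<forall>rho. realizable d N rho \<longrightarrow>
              rho \<le> (N * Gamma (1 + real d / 2) / pi powr (real d / 2)) powr (1 / real d))
       \<and> (\<forall>rho>0. realizable d (pi powr (real d / 2) * rho ^ d / Gamma (1 + real d / 2)) rho
           \<and> (\<forall>M>0. realizable d M rho \<longrightarrow>
                  pi powr (real d / 2) * rho ^ d / Gamma (1 + real d / 2) \<le> M))"
proof -
  let ?rho_max = "(N * Gamma (1 + real d / 2) / pi powr (real d / 2)) powr (1 / real d)"
  let ?N_min = "\<lambda>rho. pi powr (real d / 2) * rho ^ d / Gamma (1 + real d / 2)"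
  have "Gamma (1 + real d / 2) > 0"
    by (rule Gamma_real_pos) simp
  then have "Gamma (1 + real d / 2) \<noteq> 0"
    by linarith
  then have "?rho_max > 0"
    using assms(2) by simp
  show ?thesis
  proof (intro conjI allI impI)
    show "realizable d N ?rho_max"
      using realizable_iff_le_root[OF assms] \<open>?rho_max > 0\<close> by simp
    show "rho \<le> ?rho_max" if "realizable d N rho" for rho
      using realizable_iff_le_root[OF assms] that by blast
    show "realizable d (?N_min rho) rho" if "rho > 0" for rho
      using realizable_iff[of "?N_min rho" d rho] that by simp
    show "?N_min rho \<le> M" if "M > 0" and "realizable d M rho" for rho M
      using realizable_iff[OF that(1)] that(2) by blast
  qed
qed

end
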